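(* Let $A$ be a closed $\forall^+$ type of system $\mathcal F$. Then $A$ is an input type: for every normal $\lambda$-term $t$, if $\vdash_{\mathcal F} t : A$ then $\vdash_{\mathcal F_0} t : A$.
   Context: $\lambda$-terms are those of the untyped $\lambda$-calculus; normal means without $\beta$-redex. Types of system $\mathcal F$: built from type variables with $\rightarrow$, $\forall$; only proper types (in every $\forall XA$, $X$ occurs free in $A$). Typing: (ax) $\Gamma \vdash x_i : A_i$ for $x_i:A_i\in\Gamma$; ($\rightarrow_i$) from $\Gamma, x:B \vdash t : C$ infer $\Gamma \vdash \lambda x t : B \rightarrow C$; ($\rightarrow_e$) from $\Gamma \vdash u : B\rightarrow C$, $\Gamma \vdash v : B$ infer $\Gamma \vdash (u)v : C$; ($\forall_i$) from $\Gamma \vdash t : A$, $X$ not free in $\Gamma$, infer $\Gamma \vdash t : \forall X A$; ($\forall_e$) from $\Gamma \vdash t : \forall X A$ infer $\Gamma \vdash t : A[C/X]$ for any type $C$. $\mathcal F_0$ is $\mathcal F$ without ($\forall_e$). The classes $\forall^+$, $\forall^-$: every type variable is both; if $A$ is $\forall^+$ (resp. $\forall^-$) and $B$ is $\forall^-$ (resp. $\forall^+$) then $B\rightarrow A$ is $\forall^+$ (resp. $\forall^-$); if $A$ is $\forall^+$ and $X$ is free in $A$ then $\forall XA$ is $\forall^+$. *)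

theory Defs
  imports Main
begin

datatype trm = Var nat | Lam nat trm | App trm trm

fun is_lam :: "trm \<Rightarrow> bool" where
  "is_lam (Lam x t) = True"
| "is_lam _ = False"

fun normal :: "trm \<Rightarrow> bool" where
  "normal (Var x) = True"
| "normal (Lam x t) = normal t"
| "normal (App u v) = (\<not> is_lam u \<and> normal u \<and> normal v)"

section \<open>Types of system F, with de Bruijn indices for type variables\<close>

datatype ty = TV nat | Arr ty ty | All ty

fun fv :: "ty \<Rightarrow> nat set" where
  "fv (TV n) = {n}"
| "fv (Arr a b) = fv a \<union> fv b"
| "fv (All a) = (\<lambda>n. n - 1) ` (fv a - {0})"

definition closed :: "ty \<Rightarrow> bool" where
  "closed A \<longleftrightarrow> fv A = {}"

text \<open>proper: in every \<forall>X A, X (index 0 of the body) occurs free in A\<close>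
fun proper :: "ty \<Rightarrow> bool" where
  "proper (TV n) = True"
| "proper (Arr a b) = (proper a \<and> proper b)"
| "proper (All a) = (0 \<in> fv a \<and> proper a)"

fun shift :: "nat \<Rightarrow> nat \<Rightarrow> ty \<Rightarrow> ty" where
  "shift d c (TV n) = TV (if n < c then n else n + d)"
| "shift d c (Arr a b) = Arr (shift d c a) (shift d c b)"
| "shift d c (All a) = All (shift d (Suc c) a)"

fun subst :: "nat \<Rightarrow> ty \<Rightarrow> ty \<Rightarrow> ty" where
  "subst k C (TV n) = (if n < k then TV n else if n = k then shift k 0 C else TV (n - 1))"
| "subst k C (Arr a b) = Arr (subst k C a) (subst k C b)"
| "subst k C (All a) = All (subst (Suc k) C a)"

section \<open>Typing in F (e = True) and F_0 (e = False: no \<forall>-elimination)\<close>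

type_synonym ctx = "nat \<Rightarrow> ty option"

inductive typing :: "bool \<Rightarrow> ctx \<Rightarrow> trm \<Rightarrow> ty \<Rightarrow> bool" where
  ax: "\<Gamma> x = Some A \<Longrightarrow> typing e \<Gamma> (Var x) A"
| arrI: "proper B \<Longrightarrow> typing e (\<Gamma>(x \<mapsto> B)) t C \<Longrightarrow> typing e \<Gamma> (Lam x t) (Arr B C)"
| arrE: "typing e \<Gamma> u (Arr B C) \<Longrightarrow> typing e \<Gamma> v B \<Longrightarrow> typing e \<Gamma> (App u v) C"
| allI: "typing e (map_option (shift 1 0) \<circ> \<Gamma>) t A \<Longrightarrow> 0 \<in> fv A \<Longrightarrow> typing e \<Gamma> t (All A)"
| allE: "e \<Longrightarrow> typing e \<Gamma> t (All A) \<Longrightarrow> proper C \<Longrightarrow> typing e \<Gamma> t (subst 0 C A)"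

abbreviation typF :: "ctx \<Rightarrow> trm \<Rightarrow> ty \<Rightarrow> bool" where
  "typF \<equiv> typing True"

abbreviation typF0 :: "ctx \<Rightarrow> trm \<Rightarrow> ty \<Rightarrow> bool" where
  "typF0 \<equiv> typing False"

section \<open>The classes \<forall>+ and \<forall>-\<close>

inductive pos and neg :: "ty \<Rightarrow> bool" where
  pos_TV: "pos (TV n)"
| neg_TV: "neg (TV n)"
| pos_Arr: "neg B \<Longrightarrow> pos A \<Longrightarrow> pos (Arr B A)"
| neg_Arr: "pos B \<Longrightarrow> neg A \<Longrightarrow> neg (Arr B A)"
| pos_All: "pos A \<Longrightarrow> 0 \<in> fv A \<Longrightarrow> pos (All A)"

end

theory Submission
  imports Defs
begin

text \<open>
  In a normal term every subterm is either an abstraction or a spine \<open>x v\<^sub>1 \<dots> v\<^sub>n\<close> with a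
  variable at its head. In a context of \<open>\<forall>\<^sup>-\<close> types, the type of a spine is a codomain of the
  \<open>\<forall>\<^sup>-\<close> type of its head, so it is never a \<open>\<forall>\<close>-type (no \<open>\<forall>\<close>-elimination possible) and never
  mentions the type variable just bound (no \<open>\<forall>\<close>-introduction possible); its arguments receive
  the \<open>\<forall>\<^sup>+\<close> domains. An abstraction of \<open>\<forall>\<^sup>+\<close> type \<open>\<forall>X\<^sub>1\<dots>\<forall>X\<^sub>k (B \<rightarrow> D)\<close> can, by the substitution
  lemma, always be typed by introducing \<open>B \<rightarrow> D\<close> and generalising, with \<open>B\<close> in \<open>\<forall>\<^sup>-\<close> and \<open>D\<close> in \<open>\<forall>\<^sup>+\<close>.
  Induction on the term therefore removes every \<open>\<forall>\<close>-elimination.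
\<close>

lemma shift_0 [simp]: "shift 0 c = id"
proof
  show "shift 0 c X = id X" for X by (induction X arbitrary: c) auto
qed

lemma shift_shift: "d \<le> c \<Longrightarrow> c \<le> d + b \<Longrightarrow> shift a c (shift b d X) = shift (a + b) d X"
  by (induction X arbitrary: c d) auto

lemma fv_shift_outside: "n \<in> fv (shift d c X) \<Longrightarrow> n < c \<or> c + d \<le> n"
proof (induction X arbitrary: c n)
  case (All X)
  then obtain m where "m \<in> fv (shift d (Suc c) X)" "m \<noteq> 0" "n = m - 1" by auto
  with All.IH[where c="Suc c" and n=m] show ?case by auto
qed auto

lemma fv_shift_below: "n \<in> fv X \<Longrightarrow> n < c \<Longrightarrow> n \<in> fv (shift d c X)"
proof (induction X arbitrary: c n)
  case (All X)
  then obtain m where "m \<in> fv X" "m \<noteq> 0" "n = m - 1" by auto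
  with All.IH[where c="Suc c" and n=m] All.prems show ?case by (auto intro!: rev_image_eqI[of m])
qed auto

lemma fv_subst_below: "n \<in> fv X \<Longrightarrow> n < k \<Longrightarrow> n \<in> fv (subst k C X)"
proof (induction X arbitrary: k n)
  case (All X)
  then obtain m where "m \<in> fv X" "m \<noteq> 0" "n = m - 1" by auto
  with All.IH[where k="Suc k" and n=m] All.prems show ?case by (auto intro!: rev_image_eqI[of m])
qed auto

lemma proper_shift: "proper X \<Longrightarrow> proper (shift d c X)"
  by (induction X arbitrary: c) (auto intro: fv_shift_below)

lemma proper_subst: "proper X \<Longrightarrow> proper C \<Longrightarrow> proper (subst k C X)"
  by (induction X arbitrary: k) (auto intro: fv_subst_below proper_shift)

lemma subst_shift_commute: "d \<le> j \<Longrightarrow> subst (j + c) C (shift c d X) = shift c d (subst j C X)"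
proof (induction X arbitrary: j d)
  case (TV n)
  have "shift c d (shift j 0 C) = shift (c + j) 0 C" using TV by (simp add: shift_shift)
  with TV show ?case by (auto simp: add.commute)
next
  case (All X)
  then show ?case using All.IH[of "Suc d" "Suc j"] by simp
qed auto

lemma subst_shift_cancel: "d \<le> c \<Longrightarrow> c \<le> d + k \<Longrightarrow> subst c D (shift (Suc k) d X) = shift k d X"
  by (induction X arbitrary: c d) auto

lemma subst_subst:
  "c \<le> k \<Longrightarrow> subst k C (subst c D A) = subst c (subst (k - c) C D) (subst (Suc k) C A)"
proof (induction A arbitrary: c k)
  case (TV n)
  have "subst k C (shift c 0 D) = shift c 0 (subst (k - c) C D)"
    using subst_shift_commute[of 0 "k - c" c C D] TV by simp
  moreover have "subst c (subst (k - c) C D) (shift (Suc k) 0 C) = shift k 0 C"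
    using subst_shift_cancel[of 0 c k] TV by simp
  ultimately show ?case using TV by auto
qed auto

lemma map_option_shift_comp:
  "map_option (shift k 0) \<circ> (map_option (shift 1 0) \<circ> \<Gamma>) = map_option (shift (Suc k) 0) \<circ> \<Gamma>"
  by (rule ext) (auto simp: option.map_comp shift_shift comp_def)

lemma typing_subst:
  "typing e \<Gamma> t T \<Longrightarrow> proper C \<Longrightarrow> typing e (map_option (subst k C) \<circ> \<Gamma>) t (subst k C T)"
proof (induction arbitrary: k rule: typing.induct)
  case (ax \<Gamma> x A e)
  then show ?case by (auto intro: typing.ax)
next
  case (arrI B e \<Gamma> x t D)
  have ctx: "map_option (subst k C) \<circ> \<Gamma>(x \<mapsto> B) = (map_option (subst k C) \<circ> \<Gamma>)(x \<mapsto> subst k C B)"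
    by (rule ext) simp
  have "typing e ((map_option (subst k C) \<circ> \<Gamma>)(x \<mapsto> subst k C B)) t (subst k C D)"
    using arrI.IH[OF arrI.prems, of k] unfolding ctx .
  then show ?case unfolding subst.simps
    by (rule typing.arrI[OF proper_subst[OF arrI.hyps(1) arrI.prems]])
next
  case (arrE e \<Gamma> u B D v)
  then show ?case by (auto intro: typing.arrE)
next
  case (allI e \<Gamma> t A)
  have ctx: "map_option (subst (Suc k) C) \<circ> (map_option (shift 1 0) \<circ> \<Gamma>)
      = map_option (shift 1 0) \<circ> (map_option (subst k C) \<circ> \<Gamma>)"
    using subst_shift_commute[of 0 k 1 C] by (intro ext) (auto simp: option.map_comp comp_def)
  have "typing e (map_option (shift 1 0) \<circ> (map_option (subst k C) \<circ> \<Gamma>)) t (subst (Suc k) C A)"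
    using allI.IH[OF allI.prems, of "Suc k"] unfolding ctx .
  then show ?case unfolding subst.simps
    by (rule typing.allI) (simp add: fv_subst_below[OF allI.hyps(2)])
next
  case (allE e \<Gamma> t A D)
  have "typing e (map_option (subst k C) \<circ> \<Gamma>) t (subst 0 (subst k C D) (subst (Suc k) C A))"
    using allE.hyps(1) allE.IH[OF allE.prems, of k, unfolded subst.simps]
      proper_subst[OF allE.hyps(3) allE.prems]
    by (rule typing.allE)
  moreover have "subst k C (subst 0 D A) = subst 0 (subst k C D) (subst (Suc k) C A)"
    using subst_subst[of 0 k C D A] by simp
  ultimately show ?case by (simp only:)
qed

fun Alls :: "nat \<Rightarrow> ty \<Rightarrow> ty" where
  "Alls 0 X = X"
| "Alls (Suc k) X = All (Alls k X)"

lemma subst_Alls: "subst c C (Alls j X) = Alls j (subst (c + j) C X)"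
  by (induction j arbitrary: c) auto

lemma typing_LamD:
  assumes "typing e \<Gamma> (Lam x s) T"
  shows "\<exists>k B D. T = Alls k (Arr B D) \<and> typing e ((map_option (shift k 0) \<circ> \<Gamma>)(x \<mapsto> B)) s D"
  using assms
proof (induction e \<Gamma> "Lam x s" T rule: typing.induct)
  case (arrI B e \<Gamma> D)
  then show ?case by (intro exI[of _ 0]) (auto simp: option.map_id comp_def)
next
  case (allI e \<Gamma> A)
  then obtain k B D where "A = Alls k (Arr B D)"
    and "typing e ((map_option (shift k 0) \<circ> (map_option (shift 1 0) \<circ> \<Gamma>))(x \<mapsto> B)) s D"
    by blast
  then show ?case unfolding map_option_shift_comp by (intro exI[of _ "Suc k"]) auto
next
  case (allE e \<Gamma> A C)
  then obtain k B D where k: "All A = Alls k (Arr B D)"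
    and s: "typing e ((map_option (shift k 0) \<circ> \<Gamma>)(x \<mapsto> B)) s D" by blast
  then obtain j where j: "k = Suc j" by (cases k) auto
  \<comment> \<open>instantiating the outermost bound variable inside the derivation for the body\<close>
  have "map_option (subst j C) \<circ> ((map_option (shift k 0) \<circ> \<Gamma>)(x \<mapsto> B))
      = (map_option (shift j 0) \<circ> \<Gamma>)(x \<mapsto> subst j C B)"
    using subst_shift_cancel[of 0 j j] j by (intro ext) (auto simp: option.map_comp comp_def)
  with typing_subst[OF s \<open>proper C\<close>, of j]
  have "typing e ((map_option (shift j 0) \<circ> \<Gamma>)(x \<mapsto> subst j C B)) s (subst j C D)" by simp
  moreover have "subst 0 C A = Alls j (Arr (subst j C B) (subst j C D))"
    using k j by (simp add: subst_Alls)
  ultimately show ?case by blast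
qed

lemma pos_proper: "pos X \<Longrightarrow> proper X" and neg_proper: "neg X \<Longrightarrow> proper X"
  by (induction rule: pos_neg.inducts) auto

lemma pos_shift: "pos X \<Longrightarrow> pos (shift d c X)" and neg_shift: "neg X \<Longrightarrow> neg (shift d c X)"
  by (induction X and X arbitrary: c and c rule: pos_neg.inducts)
     (auto intro: pos_neg.intros fv_shift_below)

inductive_cases pos_AllE: "pos (All A)"
inductive_cases pos_ArrE: "pos (Arr B A)"
inductive_cases neg_ArrE: "neg (Arr B A)"
inductive_cases neg_AllE: "neg (All A)"

lemma pos_Alls_Arr: "pos (Alls k (Arr B D)) \<Longrightarrow> neg B \<and> pos D"
  by (induction k) (auto elim: pos_AllE pos_ArrE)

lemma typF0_Alls_intro:
  "typF0 (map_option (shift k 0) \<circ> \<Gamma>) t X \<Longrightarrow> pos (Alls k X) \<Longrightarrow> typF0 \<Gamma> t (Alls k X)"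
proof (induction k arbitrary: \<Gamma>)
  case 0
  then show ?case by (simp add: option.map_ident)
next
  case (Suc k)
  from Suc.prems(2) have "pos (Alls k X)" "0 \<in> fv (Alls k X)" by (auto elim: pos_AllE)
  moreover have "typF0 (map_option (shift 1 0) \<circ> \<Gamma>) t (Alls k X)"
    using Suc.IH[of "map_option (shift 1 0) \<circ> \<Gamma>"] Suc.prems(1) \<open>pos (Alls k X)\<close>
    unfolding map_option_shift_comp by blast
  ultimately show ?case by (auto intro: typing.allI)
qed

fun codomains :: "ty \<Rightarrow> ty set" where
  "codomains (Arr B D) = insert (Arr B D) (codomains D)"
| "codomains X = {X}"

lemma codomains_self: "X \<in> codomains X"
  by (cases X) auto

lemma codomains_Arr: "Arr B D \<in> codomains E \<Longrightarrow> D \<in> codomains E"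
  by (induction E) (auto simp: codomains_self)

lemma neg_codomains: "X \<in> codomains E \<Longrightarrow> neg E \<Longrightarrow> neg X"
  by (induction E) (auto elim: neg_ArrE)

lemma fv_codomains: "X \<in> codomains E \<Longrightarrow> fv X \<subseteq> fv E"
  by (induction E) auto

definition neg_ctx :: "ctx \<Rightarrow> bool" where
  "neg_ctx \<Gamma> \<longleftrightarrow> (\<forall>x E. \<Gamma> x = Some E \<longrightarrow> neg E)"

lemma neg_ctx_shift: "neg_ctx \<Gamma> \<Longrightarrow> neg_ctx (map_option (shift d c) \<circ> \<Gamma>)"
  unfolding neg_ctx_def by (auto intro: neg_shift)

lemma neg_ctx_upd: "neg_ctx \<Gamma> \<Longrightarrow> neg B \<Longrightarrow> neg_ctx (\<Gamma>(x \<mapsto> B))"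
  unfolding neg_ctx_def by auto

fun head :: "trm \<Rightarrow> nat" where
  "head (Var x) = x"
| "head (App u v) = head u"
| "head (Lam x t) = x"

fun args :: "trm \<Rightarrow> trm list" where
  "args (App u v) = args u @ [v]"
| "args _ = []"

lemma size_args_less: "v \<in> set (args t) \<Longrightarrow> size v < size t"
  by (induction t) auto

lemma normal_args: "v \<in> set (args t) \<Longrightarrow> normal t \<Longrightarrow> normal v"
  by (induction t) auto

lemma typF_spine_typF0:
  assumes "typF \<Gamma> t T" and "neg_ctx \<Gamma>" and "\<not> is_lam t" and "normal t"
    and "\<And>v \<Gamma>' T'. v \<in> set (args t) \<Longrightarrow> neg_ctx \<Gamma>' \<Longrightarrow> typF \<Gamma>' v T' \<Longrightarrow> pos T' \<Longrightarrow> typF0 \<Gamma>' v T'"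
  shows "(\<exists>E. \<Gamma> (head t) = Some E \<and> T \<in> codomains E) \<and> typF0 \<Gamma> t T"
  using assms
proof (induction True \<Gamma> t T rule: typing.induct)
  case (ax \<Gamma> x A)
  then show ?case by (auto intro: typing.ax codomains_self)
next
  case (arrI B \<Gamma> x t C)
  then show ?case by simp
next
  case (arrE \<Gamma> u B C v)
  then obtain E where E: "\<Gamma> (head u) = Some E" "Arr B C \<in> codomains E"
    and "typF0 \<Gamma> u (Arr B C)" by auto
  moreover have "neg E" using E(1) arrE.prems(1) unfolding neg_ctx_def by auto
  then have "pos B" using E(2) by (auto dest: neg_codomains elim: neg_ArrE)
  then have "typF0 \<Gamma> v B" using arrE by auto
  ultimately show ?case by (auto intro: typing.arrE codomains_Arr)
next
  case (allI \<Gamma> t A)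
  \<comment> \<open>the head's type is a shifted one, so it cannot mention the freshly bound index 0\<close>
  then obtain E where E: "(map_option (shift 1 0) \<circ> \<Gamma>) (head t) = Some E" "A \<in> codomains E"
    using neg_ctx_shift by blast
  then obtain E\<^sub>0 where "E = shift 1 0 E\<^sub>0" by auto
  moreover have "0 \<in> fv E" using E(2) fv_codomains \<open>0 \<in> fv A\<close> by blast
  ultimately show ?case using fv_shift_outside[of 0 1 0 E\<^sub>0] by simp
next
  case (allE \<Gamma> t A C)
  then obtain E where E: "\<Gamma> (head t) = Some E" "All A \<in> codomains E" by blast
  have "neg E" using E(1) allE.prems(1) unfolding neg_ctx_def by auto
  with E(2) show ?case by (auto dest: neg_codomains elim: neg_AllE)
qed

lemma typF_pos_imp_typF0:
  "normal t \<Longrightarrow> neg_ctx \<Gamma> \<Longrightarrow> typF \<Gamma> t T \<Longrightarrow> pos T \<Longrightarrow> typF0 \<Gamma> t T"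
proof (induction "size t" arbitrary: t \<Gamma> T rule: less_induct)
  case less
  show ?case
  proof (cases t)
    case (Lam x s)
    obtain k B D where T: "T = Alls k (Arr B D)"
      and s: "typF ((map_option (shift k 0) \<circ> \<Gamma>)(x \<mapsto> B)) s D"
      using typing_LamD less.prems(3) Lam by blast
    have BD: "neg B" "pos D" using less.prems(4) T pos_Alls_Arr by auto
    have "neg_ctx ((map_option (shift k 0) \<circ> \<Gamma>)(x \<mapsto> B))"
      using neg_ctx_upd[OF neg_ctx_shift[OF less.prems(2)] BD(1)] .
    with less.hyps[of s] less.prems(1) Lam s BD(2)
    have "typF0 ((map_option (shift k 0) \<circ> \<Gamma>)(x \<mapsto> B)) s D" by auto
    then have "typF0 (map_option (shift k 0) \<circ> \<Gamma>) (Lam x s) (Arr B D)"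
      using neg_proper[OF BD(1)] by (rule typing.arrI[rotated])
    then show ?thesis using typF0_Alls_intro less.prems(4) T Lam by blast
  next
    case (Var x)
    then show ?thesis using typF_spine_typF0[OF less.prems(3,2)] less.prems(1) by simp
  next
    case (App u v)
    have "typF0 \<Gamma>' w T'"
      if "w \<in> set (args t)" "neg_ctx \<Gamma>'" "typF \<Gamma>' w T'" "pos T'" for w \<Gamma>' T'
      using less.hyps[OF size_args_less] normal_args less.prems(1) that by blast
    then show ?thesis using typF_spine_typF0[OF less.prems(3,2)] less.prems(1) App by simp
  qed
qed

theorem theorem2p2p3:
  fixes A :: ty and t :: trm
  assumes "proper A" and "closed A" and "pos A"
    and "normal t"
    and "typF Map.empty t A"
  shows "typF0 Map.empty t A"
  using typF_pos_imp_typF0[OF assms(4) _ assms(5) assms(3)] by (simp add: neg_ctx_def)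

end
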